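(* Let $x\ne y$ be nodes in an ADMG $G$. There exist a node $z$ and a set $W$ such that $(\{z\},W)$ is a valid conditional instrumental set relative to $(x,y)$ in $G$ if and only if there exist a node $z'$ and a set $W'\subseteq\mathrm{an}_{\tilde G}(\{y,z'\})$ such that $(\{z'\},W')$ is a valid conditional instrumental set relative to $(x,y)$ in $G$.
   Context: An ADMG $G$ has a finite node set $V$, directed edges $u\to v$ and bidirected edges $u\leftrightarrow v$, with no directed cycle. A walk is a sequence of nodes $v_1,\dots,v_r$ with edges $e_i$ joining $v_i$ and $v_{i+1}$ (nodes may repeat). $\mathrm{de}_G(v)$ ($\mathrm{an}_G(v)$) is the set of nodes reachable from $v$ by a directed path (from which $v$ is reachable by a directed path), including $v$; for sets take unions. A non-endpoint occurrence on a walk is a collider if both incident walk edges have an arrowhead at it, otherwise a non-collider. A walk is open given $W$ if every collider is in $W$ and every non-collider is not in $W$. For disjoint $A,B,W$, $A\not\perp_G B\mid W$ if some walk from $A$ to $B$ is open given $W$, otherwise $A\perp_G B\mid W$. $\mathrm{causal}_G(x,y)=(\mathrm{de}_G(x)\cap\mathrm{an}_G(y))\setminus\{x\}$, $\mathrm{forb}_G(x,y)=\mathrm{de}_G(\mathrm{causal}_G(x,y))\cup\{x\}$, and $\tilde G$ is $G$ with all directed edges $x\to c$, $c\in\mathrm{causal}_G(x,y)$, removed. For pairwise disjoint $\{x,y\},Z,W$, $(Z,W)$ is a valid conditional instrumental set relative to $(x,y)$ in $G$ iff (a) $(Z\cup W)\cap\mathrm{forb}_G(x,y)=\emptyset$,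 (b) $x\not\perp_G Z\mid W$, and (c) $y\perp_{\tilde G} Z\mid W$. *)

theory Defs
  imports Main
begin

text \<open>An ADMG: finite node set, directed edges (a,b) meaning a \<rightarrow> b,
  bidirected edges (a,b) meaning a \<leftrightarrow> b (orientation of the pair irrelevant).\<close>
record 'v admg =
  nodes :: "'v set"
  dir :: "('v \<times> 'v) set"
  bi :: "('v \<times> 'v) set"

definition is_admg :: "'v admg \<Rightarrow> bool" where
  "is_admg G \<longleftrightarrow> finite (nodes G) \<and> dir G \<subseteq> nodes G \<times> nodes G
     \<and> bi G \<subseteq> nodes G \<times> nodes G \<and> irrefl (bi G) \<and> acyclic (dir G)"

text \<open>Kind of the i-th walk edge, read from v_i to v_(i+1):
  Fwd: v_i \<rightarrow> v_(i+1); Bwd: v_i \<leftarrow> v_(i+1); Bid: v_i \<leftrightarrow> v_(i+1).\<close>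
datatype ekind = Fwd | Bwd | Bid

definition step_ok :: "'v admg \<Rightarrow> 'v \<Rightarrow> ekind \<Rightarrow> 'v \<Rightarrow> bool" where
  "step_ok G a k b \<longleftrightarrow>
     (case k of Fwd \<Rightarrow> (a, b) \<in> dir G
              | Bwd \<Rightarrow> (b, a) \<in> dir G
              | Bid \<Rightarrow> (a, b) \<in> bi G \<or> (b, a) \<in> bi G)"

definition is_walk :: "'v admg \<Rightarrow> 'v list \<Rightarrow> ekind list \<Rightarrow> bool" where
  "is_walk G vs ks \<longleftrightarrow> length vs = Suc (length ks) \<and> set vs \<subseteq> nodes G
     \<and> (\<forall>i < length ks. step_ok G (vs ! i) (ks ! i) (vs ! Suc i))"

text \<open>Arrowhead at the head of an edge (at v_(i+1)) resp. at its tail (at v_i).\<close>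
definition arrow_at_end :: "ekind \<Rightarrow> bool" where
  "arrow_at_end k \<longleftrightarrow> k = Fwd \<or> k = Bid"
definition arrow_at_start :: "ekind \<Rightarrow> bool" where
  "arrow_at_start k \<longleftrightarrow> k = Bwd \<or> k = Bid"

text \<open>Non-endpoint occurrence i (0 < i < length ks) is a collider.\<close>
definition collider :: "ekind list \<Rightarrow> nat \<Rightarrow> bool" where
  "collider ks i \<longleftrightarrow> arrow_at_end (ks ! (i - 1)) \<and> arrow_at_start (ks ! i)"

definition open_walk :: "'v list \<Rightarrow> ekind list \<Rightarrow> 'v set \<Rightarrow> bool" where
  "open_walk vs ks W \<longleftrightarrow>
     (\<forall>i. 0 < i \<and> i < length ks \<longrightarrow>
        (if collider ks i then vs ! i \<in> W else vs ! i \<notin> W))"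

definition d_connected :: "'v admg \<Rightarrow> 'v set \<Rightarrow> 'v set \<Rightarrow> 'v set \<Rightarrow> bool" where
  "d_connected G A B W \<longleftrightarrow>
     (\<exists>vs ks. is_walk G vs ks \<and> hd vs \<in> A \<and> last vs \<in> B \<and> open_walk vs ks W)"

definition d_separated :: "'v admg \<Rightarrow> 'v set \<Rightarrow> 'v set \<Rightarrow> 'v set \<Rightarrow> bool" where
  "d_separated G A B W \<longleftrightarrow> \<not> d_connected G A B W"

definition de :: "'v admg \<Rightarrow> 'v set \<Rightarrow> 'v set" where
  "de G S = {w. \<exists>v\<in>S. (v, w) \<in> (dir G)\<^sup>*}"

definition an :: "'v admg \<Rightarrow> 'v set \<Rightarrow> 'v set" where
  "an G S = {w. \<exists>v\<in>S. (w, v) \<in> (dir G)\<^sup>*}"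

definition causal :: "'v admg \<Rightarrow> 'v \<Rightarrow> 'v \<Rightarrow> 'v set" where
  "causal G x y = (de G {x} \<inter> an G {y}) - {x}"

definition forb :: "'v admg \<Rightarrow> 'v \<Rightarrow> 'v \<Rightarrow> 'v set" where
  "forb G x y = de G (causal G x y) \<union> {x}"

definition tilde :: "'v admg \<Rightarrow> 'v \<Rightarrow> 'v \<Rightarrow> 'v admg" where
  "tilde G x y = G\<lparr>dir := dir G - {(x, c) | c. c \<in> causal G x y}\<rparr>"

text \<open>Valid conditional instrumental set; the standing requirement that
  {x,y}, Z, W are pairwise disjoint is included.\<close>
definition valid_cis :: "'v admg \<Rightarrow> 'v \<Rightarrow> 'v \<Rightarrow> 'v set \<Rightarrow> 'v set \<Rightarrow> bool" where
  "valid_cis G x y Z W \<longleftrightarrow>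
     {x, y} \<inter> Z = {} \<and> {x, y} \<inter> W = {} \<and> Z \<inter> W = {}
     \<and> (Z \<union> W) \<inter> forb G x y = {}
     \<and> d_connected G {x} Z W
     \<and> d_separated (tilde G x y) {y} Z W"

end

theory Submission imports Defs begin

(* Write ~G for tilde G x y. For the forward one, let (z, W) be
   valid with W not contained in an~G {y, z}, and remove from W a node w outside an~G {y, z} that
   has no proper ~G-descendant in W; induction on |W| then gives the claim.
   A non-collider on a walk that is open given W - {w} has a directed path to an endpoint or to a
   collider of the walk, so it cannot be w on ~G-walks starting at y and ending at z or w: such
   walks open given W - {w} are open given W. Take a walk from x to z open given W that visits x
   only once. If w is not on it, (z, W - {w}) is valid. Otherwise w is a collider at its first
   occurrence, the prefix up to w connects x and w given W - {w}, and the rest of the walk avoids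
   x, so it is a ~G-walk. An open ~G-walk from y to w given W - {w} enters w with an arrowhead,
   as w is not an ancestor of y or of W - {w}; followed by that rest it would be a ~G-walk from y
   to z open given W. Hence (w, W - {w}) is valid. *)

lemma is_walk_length: "is_walk H vs ks \<Longrightarrow> length vs = Suc (length ks)"
  by (simp add: is_walk_def)

lemma is_walk_step: "is_walk H vs ks \<Longrightarrow> i < length ks \<Longrightarrow> step_ok H (vs ! i) (ks ! i) (vs ! Suc i)"
  by (simp add: is_walk_def)

lemma is_walk_hd_last_nth:
  assumes "is_walk H vs ks"
  shows "vs ! 0 = hd vs" "vs ! length ks = last vs"
proof -
  have "vs \<noteq> []" using is_walk_length[OF assms] by auto
  with is_walk_length[OF assms] show "vs ! 0 = hd vs" "vs ! length ks = last vs"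
    by (simp_all add: hd_conv_nth last_conv_nth)
qed

lemma not_collider_iff: "\<not> collider ks i \<longleftrightarrow> ks ! (i - 1) = Bwd \<or> ks ! i = Fwd"
  by (cases "ks ! (i - 1)"; cases "ks ! i") (auto simp: collider_def arrow_at_end_def arrow_at_start_def)

lemma walk_Fwd_path_to_collider:
  assumes walk: "is_walk H vs ks" and "i < length ks" "ks ! i = Fwd"
  shows "\<exists>j. i < j \<and> j \<le> length ks \<and> (vs ! i, vs ! j) \<in> (dir H)\<^sup>+ \<and> (j = length ks \<or> collider ks j)"
  using assms(2,3)
proof (induction "length ks - i" arbitrary: i rule: less_induct)
  case less
  have edge: "(vs ! i, vs ! Suc i) \<in> dir H"
    using is_walk_step[OF walk less.prems(1)] less.prems(2) by (simp add: step_ok_def)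
  show ?case
  proof (cases "Suc i = length ks \<or> collider ks (Suc i)")
    case True
    with edge less.prems show ?thesis by (intro exI[of _ "Suc i"]) auto
  next
    case False
    then have "Suc i < length ks" "ks ! Suc i = Fwd" "length ks - Suc i < length ks - i"
      using less.prems by (auto simp: not_collider_iff)
    with less.hyps[of "Suc i"] obtain j where
      "Suc i < j" "j \<le> length ks" "(vs ! Suc i, vs ! j) \<in> (dir H)\<^sup>+" "j = length ks \<or> collider ks j"
      by auto
    with edge show ?thesis by (intro exI[of _ j]) (auto intro: trancl_into_trancl2)
  qed
qed

lemma walk_Bwd_path_to_collider:
  assumes walk: "is_walk H vs ks" and "0 < i" "i \<le> length ks" "ks ! (i - 1) = Bwd"
  shows "\<exists>j < i. (vs ! i, vs ! j) \<in> (dir H)\<^sup>+ \<and> (j = 0 \<or> collider ks j)"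
  using assms(2-4)
proof (induction i rule: less_induct)
  case (less i)
  then obtain k where k: "i = Suc k" by (cases i) auto
  have edge: "(vs ! i, vs ! k) \<in> dir H"
    using is_walk_step[OF walk, of k] less.prems k by (simp add: step_ok_def)
  show ?case
  proof (cases "k = 0 \<or> collider ks k")
    case True
    with edge k show ?thesis by auto
  next
    case False
    then have "0 < k" "ks ! (k - 1) = Bwd"
      using less.prems k by (auto simp: not_collider_iff)
    with less.IH[of k] k less.prems obtain j where
      "j < k" "(vs ! k, vs ! j) \<in> (dir H)\<^sup>+" "j = 0 \<or> collider ks j"
      by auto
    moreover have "(vs ! i, vs ! j) \<in> (dir H)\<^sup>+"
      using edge \<open>(vs ! k, vs ! j) \<in> (dir H)\<^sup>+\<close> by (rule trancl_into_trancl2)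
    ultimately show ?thesis using k by (intro exI[of _ j]) auto
  qed
qed

lemma open_walk_noncollider_ancestor:
  assumes walk: "is_walk H vs ks" and open_walk: "open_walk vs ks C"
    and i: "0 < i" "i < length ks" "\<not> collider ks i"
  shows "\<exists>j \<le> length ks. (vs ! i, vs ! j) \<in> (dir H)\<^sup>+ \<and> (j = 0 \<or> j = length ks \<or> vs ! j \<in> C)"
proof -
  have colliders_in_C: "vs ! j \<in> C" if "0 < j" "j < length ks" "collider ks j" for j
    using open_walk that by (auto simp: open_walk_def)
  from i(3) consider "ks ! (i - 1) = Bwd" | "ks ! i = Fwd" by (auto simp: not_collider_iff)
  then show ?thesis
  proof cases
    case 1
    with walk_Bwd_path_to_collider[OF walk i(1)] i obtain j where
      "j < i" "(vs ! i, vs ! j) \<in> (dir H)\<^sup>+" "j = 0 \<or> collider ks j"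
      by auto
    with i colliders_in_C show ?thesis by (intro exI[of _ j]) (cases "j = 0", auto)
  next
    case 2
    with walk_Fwd_path_to_collider[OF walk i(2)] obtain j where
      "i < j" "j \<le> length ks" "(vs ! i, vs ! j) \<in> (dir H)\<^sup>+" "j = length ks \<or> collider ks j"
      by auto
    with colliders_in_C show ?thesis by (intro exI[of _ j]) (cases "j = length ks", auto)
  qed
qed

lemma open_walk_insert_nonancestor:
  assumes walk: "is_walk H vs ks" and open_walk: "open_walk vs ks (C - {w})"
    and nonanc: "(w, hd vs) \<notin> (dir H)\<^sup>+" "(w, last vs) \<notin> (dir H)\<^sup>+"
      "\<forall>c \<in> C - {w}. (w, c) \<notin> (dir H)\<^sup>+"
  shows "open_walk vs ks C"
  unfolding open_walk_def
proof (intro allI impI)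
  fix i assume i: "0 < i \<and> i < length ks"
  show "if collider ks i then vs ! i \<in> C else vs ! i \<notin> C"
  proof (cases "collider ks i")
    case True
    with open_walk i show ?thesis by (auto simp: open_walk_def)
  next
    case False
    with open_walk_noncollider_ancestor[OF walk open_walk] i obtain j where
      "j \<le> length ks" "(vs ! i, vs ! j) \<in> (dir H)\<^sup>+" "j = 0 \<or> j = length ks \<or> vs ! j \<in> C - {w}"
      by blast
    with nonanc is_walk_hd_last_nth[OF walk] have "vs ! i \<noteq> w" by auto
    with open_walk i False show ?thesis by (auto simp: open_walk_def)
  qed
qed

lemma open_walk_remove:
  assumes "open_walk vs ks C" "\<forall>i. 0 < i \<longrightarrow> i < length ks \<longrightarrow> vs ! i \<noteq> w"
  shows "open_walk vs ks (C - {w})"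
  using assms by (auto simp: open_walk_def)

lemma is_walk_take: "is_walk H vs ks \<Longrightarrow> p \<le> length ks \<Longrightarrow> is_walk H (take (Suc p) vs) (take p ks)"
  by (auto simp: is_walk_def min_def dest: in_set_takeD)

lemma open_walk_take: "open_walk vs ks C \<Longrightarrow> open_walk (take (Suc p) vs) (take p ks) C"
  by (auto simp: open_walk_def collider_def)

lemma is_walk_drop: "is_walk H vs ks \<Longrightarrow> p \<le> length ks \<Longrightarrow> is_walk H (drop p vs) (drop p ks)"
  by (auto simp: is_walk_def Suc_diff_le dest: in_set_dropD)

lemma open_walk_drop:
  assumes "is_walk H vs ks" "open_walk vs ks C"
  shows "open_walk (drop p vs) (drop p ks) C"
  using assms by (auto simp: open_walk_def collider_def is_walk_def)

lemma nth_append_tl: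
  assumes "xs \<noteq> []" "last xs = hd ys" "length xs \<le> Suc i" "Suc i < length xs + length ys"
  shows "(xs @ tl ys) ! i = ys ! (Suc i - length xs)"
proof (cases "i < length xs")
  case True
  with assms(3) have i: "i = length xs - 1" by linarith
  with True assms(1) have "(xs @ tl ys) ! i = last xs" by (simp add: nth_append last_conv_nth)
  also have "\<dots> = ys ! 0" using assms(2-4) by (cases ys) auto
  finally show ?thesis using i True by simp
next
  case False
  then have "(xs @ tl ys) ! i = tl ys ! (i - length xs)" by (simp add: nth_append)
  also have "\<dots> = ys ! Suc (i - length xs)" using False assms(4) by (simp add: nth_tl)
  finally show ?thesis using False by (simp add: Suc_diff_le)
qed

lemma is_walk_append:
  assumes walk1: "is_walk H vs1 ks1" and walk2: "is_walk H vs2 ks2" and join: "last vs1 = hd vs2"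
  shows "is_walk H (vs1 @ tl vs2) (ks1 @ ks2)"
proof -
  note len1 = is_walk_length[OF walk1] and len2 = is_walk_length[OF walk2]
  have "set (vs1 @ tl vs2) \<subseteq> nodes H"
    using walk1 walk2 by (auto simp: is_walk_def dest: list.set_sel(2)[rotated])
  moreover have "step_ok H ((vs1 @ tl vs2) ! i) ((ks1 @ ks2) ! i) ((vs1 @ tl vs2) ! Suc i)"
    if i: "i < length ks1 + length ks2" for i
  proof (cases "i < length ks1")
    case True
    with is_walk_step[OF walk1 True] len1 show ?thesis by (simp add: nth_append)
  next
    case False
    have "vs1 \<noteq> []" using len1 by auto
    with i False len1 len2 join have "(vs1 @ tl vs2) ! i = vs2 ! (i - length ks1)"
      "(vs1 @ tl vs2) ! Suc i = vs2 ! Suc (i - length ks1)"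
      using nth_append_tl[of vs1 vs2 i] nth_append_tl[of vs1 vs2 "Suc i"] by (auto simp: Suc_diff_le)
    with is_walk_step[OF walk2, of "i - length ks1"] i False show ?thesis
      by (simp add: nth_append)
  qed
  ultimately show ?thesis using len1 len2 by (simp add: is_walk_def)
qed

lemma open_walk_append_collider:
  assumes walk1: "is_walk H vs1 ks1" and walk2: "is_walk H vs2 ks2" and join: "last vs1 = hd vs2"
    and open1: "open_walk vs1 ks1 C" and open2: "open_walk vs2 ks2 C"
    and nonempty: "ks1 \<noteq> []" "ks2 \<noteq> []"
    and collider: "arrow_at_end (last ks1)" "arrow_at_start (hd ks2)" "last vs1 \<in> C"
  shows "open_walk (vs1 @ tl vs2) (ks1 @ ks2) C"
  unfolding open_walk_def
proof (intro allI impI)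
  note len1 = is_walk_length[OF walk1] and len2 = is_walk_length[OF walk2]
  fix i assume i: "0 < i \<and> i < length (ks1 @ ks2)"
  consider "i < length ks1" | "i = length ks1" | "length ks1 < i" by linarith
  then show "if collider (ks1 @ ks2) i then (vs1 @ tl vs2) ! i \<in> C else (vs1 @ tl vs2) ! i \<notin> C"
  proof cases
    case 1
    with i len1 open1 show ?thesis by (auto simp: open_walk_def collider_def nth_append)
  next
    case 2
    with nonempty collider len1 is_walk_hd_last_nth(2)[OF walk1]
    have "collider (ks1 @ ks2) i" "(vs1 @ tl vs2) ! i = last vs1"
      by (simp_all add: collider_def nth_append last_conv_nth hd_conv_nth)
    with collider show ?thesis by simp
  next
    case 3
    with i have "collider (ks1 @ ks2) i = collider ks2 (i - length ks1)"
      by (auto simp: collider_def nth_append)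
    moreover have "(vs1 @ tl vs2) ! i = vs2 ! (i - length ks1)"
      using 3 i len1 len2 join nth_append_tl[of vs1 vs2 i] by (cases vs1) auto
    ultimately show ?thesis using 3 i open2 by (auto simp: open_walk_def)
  qed
qed

lemma is_walk_tilde:
  assumes walk: "is_walk G vs ks" and "x \<notin> set vs"
  shows "is_walk (tilde G x y) vs ks"
proof -
  have "vs ! i \<noteq> x" if "i < length vs" for i
    using assms(2) that by (auto dest: nth_mem)
  with walk show ?thesis
    by (fastforce simp: is_walk_def step_ok_def tilde_def split: ekind.splits)
qed

lemma d_connected_walk_leaving_source:
  assumes "d_connected G {x} B C"
  obtains vs ks where "is_walk G vs ks" "hd vs = x" "last vs \<in> B" "open_walk vs ks C"
    "x \<notin> set (tl vs)"
proof -
  obtain vs ks where walk: "is_walk G vs ks" and "hd vs = x" "last vs \<in> B"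
    and open_walk: "open_walk vs ks C"
    using assms by (auto simp: d_connected_def)
  from walk have "vs \<noteq> []" by (auto simp: is_walk_def)
  with \<open>hd vs = x\<close> obtain us zs where vs: "vs = us @ x # zs" and "x \<notin> set zs"
    by (metis hd_in_set split_list_last)
  define p where "p = length us"
  have suffix: "drop p vs = x # zs" by (simp add: vs p_def)
  have "p \<le> length ks" using is_walk_length[OF walk] by (simp add: vs p_def)
  show ?thesis
  proof (rule that)
    show "is_walk G (x # zs) (drop p ks)"
      using is_walk_drop[OF walk \<open>p \<le> length ks\<close>] by (simp only: suffix)
    show "open_walk (x # zs) (drop p ks) C"
      using open_walk_drop[OF walk open_walk, of p] by (simp only: suffix)
    show "last (x # zs) \<in> B" using \<open>last vs \<in> B\<close> by (simp add: vs)
  qed (use \<open>x \<notin> set zs\<close> in simp_all)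
qed

lemma subset_an: "S \<subseteq> an H S"
  by (auto simp: an_def)

lemma an_trancl_closed: "(w, c) \<in> (dir H)\<^sup>+ \<Longrightarrow> c \<in> an H S \<Longrightarrow> w \<in> an H S"
  unfolding an_def by (blast intro: rtrancl_trans trancl_into_rtrancl)

lemma is_admg_tilde:
  assumes "is_admg G"
  shows "is_admg (tilde G x y)"
proof -
  have "nodes (tilde G x y) = nodes G" "bi (tilde G x y) = bi G" "dir (tilde G x y) \<subseteq> dir G"
    by (auto simp: tilde_def)
  with assms show ?thesis
    unfolding is_admg_def by (metis acyclic_subset subset_trans)
qed

lemma is_admg_finite_dir: "is_admg G \<Longrightarrow> finite (dir G)"
  unfolding is_admg_def by (meson finite_SigmaI finite_subset)

lemma finite_acyclic_obtain_sink:
  assumes "finite R" "acyclic R" "w\<^sub>0 \<in> S"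
  obtains w where "w \<in> S" "\<forall>c \<in> S. (w, c) \<notin> R\<^sup>+"
proof -
  have "wf ((R\<^sup>+)\<inverse>)"
    using wf_trancl[OF finite_acyclic_wf_converse[OF assms(1,2)]] by (simp add: trancl_converse)
  then obtain w where "w \<in> S" "\<And>c. (c, w) \<in> (R\<^sup>+)\<inverse> \<Longrightarrow> c \<notin> S"
    using assms(3) by (rule wfE_min) blast
  with that show ?thesis by auto
qed

lemma open_walk_arrow_into_last:
  assumes walk: "is_walk H vs ks" and open_walk: "open_walk vs ks C" and "ks \<noteq> []"
    and nonanc: "(last vs, hd vs) \<notin> (dir H)\<^sup>+" "\<forall>c \<in> C. (last vs, c) \<notin> (dir H)\<^sup>+"
  shows "arrow_at_end (last ks)"
proof (rule ccontr)
  assume "\<not> arrow_at_end (last ks)"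
  with \<open>ks \<noteq> []\<close> have "ks ! (length ks - 1) = Bwd"
    by (cases "last ks") (auto simp: arrow_at_end_def last_conv_nth)
  with walk_Bwd_path_to_collider[OF walk, of "length ks"] \<open>ks \<noteq> []\<close> obtain j where
    "j < length ks" "(vs ! length ks, vs ! j) \<in> (dir H)\<^sup>+" "j = 0 \<or> collider ks j"
    by auto
  with nonanc open_walk is_walk_hd_last_nth[OF walk] show False
    by (cases "j = 0") (auto simp: open_walk_def)
qed

lemma d_separated_remove_nonancestor:
  assumes sep: "d_separated H {y} {z} W" and w_nonanc: "w \<notin> an H {y, z}"
    and w_max: "\<forall>c \<in> W - {w}. (w, c) \<notin> (dir H)\<^sup>+"
  shows "d_separated H {y} {z} (W - {w})"
  unfolding d_separated_def
proof
  assume "d_connected H {y} {z} (W - {w})"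
  then obtain vs ks where walk: "is_walk H vs ks" and ends: "hd vs = y" "last vs = z"
    and open_walk: "open_walk vs ks (W - {w})"
    by (auto simp: d_connected_def)
  have "(w, y) \<notin> (dir H)\<^sup>+" "(w, z) \<notin> (dir H)\<^sup>+"
    using w_nonanc an_trancl_closed[of w _ H "{y, z}"] subset_an[of "{y, z}" H] by blast+
  with open_walk_insert_nonancestor[OF walk open_walk] ends w_max
  have "open_walk vs ks W" by simp
  with sep walk ends show False by (auto simp: d_separated_def d_connected_def)
qed

lemma d_separated_at_collider:
  assumes acyc: "acyclic (dir H)" and sep: "d_separated H {y} {z} W"
    and "w \<in> W" and w_nonanc: "w \<notin> an H {y}"
    and w_max: "\<forall>c \<in> W - {w}. (w, c) \<notin> (dir H)\<^sup>+"
    and walk: "is_walk H vs ks" and "hd vs = w" "last vs = z" and open_walk: "open_walk vs ks W"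
    and "ks \<noteq> []" and arrow: "arrow_at_start (hd ks)"
  shows "d_separated H {y} {w} (W - {w})"
  unfolding d_separated_def
proof
  assume "d_connected H {y} {w} (W - {w})"
  then obtain us ls where walk': "is_walk H us ls" and ends: "hd us = y" "last us = w"
    and open_walk': "open_walk us ls (W - {w})"
    by (auto simp: d_connected_def)
  have "(w, y) \<notin> (dir H)\<^sup>+"
    using w_nonanc an_trancl_closed[of w y H "{y}"] subset_an[of "{y}" H] by blast
  moreover have "(w, w) \<notin> (dir H)\<^sup>+" using acyc by (simp add: acyclic_def)
  ultimately have "open_walk us ls W"
    using open_walk_insert_nonancestor[OF walk' open_walk'] ends w_max by simp
  moreover have "ls \<noteq> []"
  proof
    assume "ls = []"
    then have "y = w" using is_walk_hd_last_nth[OF walk'] ends by simp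
    with w_nonanc subset_an[of "{y}" H] show False by blast
  qed
  moreover have "arrow_at_end (last ls)"
    using open_walk_arrow_into_last[OF walk' open_walk' \<open>ls \<noteq> []\<close>] ends w_max
      \<open>(w, y) \<notin> (dir H)\<^sup>+\<close> by simp
  ultimately have "open_walk (us @ tl vs) (ls @ ks) W"
    using open_walk_append_collider[OF walk' walk _ _ open_walk _ \<open>ks \<noteq> []\<close> _ arrow]
      \<open>w \<in> W\<close> \<open>hd vs = w\<close> ends by simp
  moreover have "is_walk H (us @ tl vs) (ls @ ks)"
    using is_walk_append[OF walk' walk] \<open>hd vs = w\<close> ends by simp
  moreover have "us \<noteq> []" using is_walk_length[OF walk'] by auto
  moreover have "tl vs \<noteq> []" using is_walk_length[OF walk] \<open>ks \<noteq> []\<close> by (cases vs) auto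
  ultimately have "d_connected H {y} {z} W"
    using ends \<open>last vs = z\<close> unfolding d_connected_def
    by (intro exI[of _ "us @ tl vs"] exI[of _ "ls @ ks"]) (simp add: last_tl)
  with sep show False by (simp add: d_separated_def)
qed

lemma d_connected_to_first_occurrence:
  assumes walk: "is_walk H vs ks" and "hd vs \<in> A" "open_walk vs ks C"
    and vs: "vs = us @ w # zs" and "w \<notin> set us"
  shows "d_connected H A {w} (C - {w})"
proof -
  define p where "p = length us"
  have prefix: "take (Suc p) vs = us @ [w]" by (simp add: vs p_def)
  have "p \<le> length ks" using is_walk_length[OF walk] by (simp add: vs p_def)
  have "is_walk H (us @ [w]) (take p ks)"
    using is_walk_take[OF walk \<open>p \<le> length ks\<close>] by (simp only: prefix)
  moreover have "open_walk (us @ [w]) (take p ks) (C - {w})"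
  proof (rule open_walk_remove)
    show "open_walk (us @ [w]) (take p ks) C"
      using open_walk_take[OF \<open>open_walk vs ks C\<close>, of p] by (simp only: prefix)
    show "\<forall>i. 0 < i \<longrightarrow> i < length (take p ks) \<longrightarrow> (us @ [w]) ! i \<noteq> w"
      using \<open>w \<notin> set us\<close> by (auto simp: p_def nth_append)
  qed
  moreover have "hd (us @ [w]) \<in> A" using \<open>hd vs \<in> A\<close> by (cases us) (simp_all add: vs)
  ultimately show ?thesis unfolding d_connected_def by (intro exI[of _ "us @ [w]"]) auto
qed

lemma valid_cis_from_subset:
  assumes "valid_cis G x y {z} W" "z' \<in> insert z W" "W' \<subseteq> W - {z'}"
    and "d_connected G {x} {z'} W'" "d_separated (tilde G x y) {y} {z'} W'"
  shows "valid_cis G x y {z'} W'"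
  using assms by (auto simp: valid_cis_def)

lemma valid_cis_remove_off_walk:
  assumes valid: "valid_cis G x y {z} W"
    and walk: "is_walk G vs ks" "hd vs = x" "last vs = z" "open_walk vs ks W" "w \<notin> set vs"
    and w_nonanc: "w \<notin> an (tilde G x y) {y, z}"
    and w_max: "\<forall>c \<in> W - {w}. (w, c) \<notin> (dir (tilde G x y))\<^sup>+"
  shows "valid_cis G x y {z} (W - {w})"
proof -
  from valid have sep: "d_separated (tilde G x y) {y} {z} W" by (simp add: valid_cis_def)
  have "open_walk vs ks (W - {w})"
    using walk(4,5) is_walk_length[OF walk(1)] by (intro open_walk_remove) (auto dest: nth_mem)
  with walk(1-3) have conn: "d_connected G {x} {z} (W - {w})"
    unfolding d_connected_def by auto
  have "z \<notin> W" using valid by (simp add: valid_cis_def)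
  show ?thesis
    by (rule valid_cis_from_subset[OF valid _ _ conn
          d_separated_remove_nonancestor[OF sep w_nonanc w_max]]) (use \<open>z \<notin> W\<close> in auto)
qed

lemma valid_cis_switch_to_collider:
  assumes adm: "is_admg G" and valid: "valid_cis G x y {z} W"
    and walk: "is_walk G vs ks" and ends: "hd vs = x" "last vs = z"
    and open_walk: "open_walk vs ks W" and "x \<notin> set (tl vs)"
    and "w \<in> W" "w \<in> set vs" and w_nonanc: "w \<notin> an (tilde G x y) {y}"
    and w_max: "\<forall>c \<in> W - {w}. (w, c) \<notin> (dir (tilde G x y))\<^sup>+"
  shows "valid_cis G x y {w} (W - {w})"
proof -
  let ?T = "tilde G x y"
  from valid have "x \<notin> W" "z \<notin> W" and sep: "d_separated ?T {y} {z} W"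
    by (auto simp: valid_cis_def)
  obtain us zs where vs: "vs = us @ w # zs" and "w \<notin> set us"
    using split_list_first[OF \<open>w \<in> set vs\<close>] by blast
  define p where "p = length us"
  have "us \<noteq> []" using ends \<open>x \<notin> W\<close> \<open>w \<in> W\<close> by (auto simp: vs)
  have "zs \<noteq> []" using ends \<open>z \<notin> W\<close> \<open>w \<in> W\<close> by (auto simp: vs)
  have suffix: "drop p vs = w # zs" by (simp add: vs p_def)
  have "0 < p" using \<open>us \<noteq> []\<close> by (simp add: p_def)
  have "p < length ks"
    using \<open>zs \<noteq> []\<close> is_walk_length[OF walk] by (cases zs) (auto simp: vs p_def)
  with open_walk \<open>0 < p\<close> have "if collider ks p then vs ! p \<in> W else vs ! p \<notin> W"
    by (simp add: open_walk_def)
  moreover have "vs ! p = w" by (simp add: vs p_def)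
  ultimately have "collider ks p" using \<open>w \<in> W\<close> by (auto split: if_splits)
  then have "drop p ks \<noteq> []" "arrow_at_start (hd (drop p ks))"
    using \<open>p < length ks\<close> by (auto simp: collider_def hd_drop_conv_nth)
  have "x \<notin> set (w # zs)"
    using \<open>x \<notin> set (tl vs)\<close> \<open>us \<noteq> []\<close> by (auto simp: vs)
  moreover have "is_walk G (w # zs) (drop p ks)"
    using is_walk_drop[OF walk, of p] \<open>p < length ks\<close> by (simp add: suffix)
  ultimately have suffix_walk: "is_walk ?T (w # zs) (drop p ks)"
    by (intro is_walk_tilde)
  have suffix_open: "open_walk (w # zs) (drop p ks) W"
    using open_walk_drop[OF walk open_walk, of p] by (simp only: suffix)
  have "last (w # zs) = z" using ends by (simp add: vs)
  have "acyclic (dir ?T)" using is_admg_tilde[OF adm] by (simp add: is_admg_def)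
  from d_separated_at_collider[OF this sep \<open>w \<in> W\<close> w_nonanc w_max suffix_walk list.sel(1)
      \<open>last (w # zs) = z\<close> suffix_open \<open>drop p ks \<noteq> []\<close> \<open>arrow_at_start (hd (drop p ks))\<close>]
  have sep': "d_separated ?T {y} {w} (W - {w})" .
  have conn: "d_connected G {x} {w} (W - {w})"
    using d_connected_to_first_occurrence[OF walk _ open_walk vs \<open>w \<notin> set us\<close>] ends by simp
  show ?thesis
    by (rule valid_cis_from_subset[OF valid _ _ conn sep']) (use \<open>w \<in> W\<close> in auto)
qed

lemma valid_cis_remove_maximal:
  assumes adm: "is_admg G" and valid: "valid_cis G x y {z} W"
    and "w \<in> W" and w_nonanc: "w \<notin> an (tilde G x y) {y, z}"
    and w_max: "\<forall>c \<in> W - {w}. (w, c) \<notin> (dir (tilde G x y))\<^sup>+"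
  shows "\<exists>z' \<in> nodes G. valid_cis G x y {z'} (W - {w})"
proof -
  from valid have "d_connected G {x} {z} W" by (simp add: valid_cis_def)
  then obtain vs ks where walk: "is_walk G vs ks" and "hd vs = x" "last vs \<in> {z}"
    and open_walk: "open_walk vs ks W" and "x \<notin> set (tl vs)"
    by (rule d_connected_walk_leaving_source)
  then have ends: "hd vs = x" "last vs = z" by simp_all
  have nodes: "set vs \<subseteq> nodes G" using walk by (simp add: is_walk_def)
  show ?thesis
  proof (cases "w \<in> set vs")
    case True
    have "w \<notin> an (tilde G x y) {y}" using w_nonanc by (auto simp: an_def)
    with valid_cis_switch_to_collider[OF adm valid walk ends open_walk \<open>x \<notin> set (tl vs)\<close>
        \<open>w \<in> W\<close> True _ w_max]
    show ?thesis using True nodes by blast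
  next
    case False
    have "vs \<noteq> []" using is_walk_length[OF walk] by auto
    with ends have "z \<in> set vs" by auto
    with valid_cis_remove_off_walk[OF valid walk ends open_walk False w_nonanc w_max]
    show ?thesis using nodes by blast
  qed
qed

lemma valid_cis_ancestral_exists:
  assumes adm: "is_admg G"
  shows "valid_cis G x y {z} W \<Longrightarrow> W \<subseteq> nodes G \<Longrightarrow> z \<in> nodes G \<Longrightarrow>
    \<exists>z' W'. z' \<in> nodes G \<and> W' \<subseteq> W \<and> W' \<subseteq> an (tilde G x y) {y, z'} \<and> valid_cis G x y {z'} W'"
proof (induction "card W" arbitrary: z W rule: less_induct)
  case less
  let ?T = "tilde G x y"
  show ?case
  proof (cases "W \<subseteq> an ?T {y, z}")
    case True
    with less.prems show ?thesis by blast
  next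
    case False
    have "finite (dir ?T)" "acyclic (dir ?T)"
      using is_admg_tilde[OF adm] by (simp_all add: is_admg_finite_dir is_admg_def)
    moreover from False obtain w\<^sub>0 where "w\<^sub>0 \<in> W - an ?T {y, z}" by blast
    ultimately obtain w where w: "w \<in> W - an ?T {y, z}"
      and w_sink: "\<forall>c \<in> W - an ?T {y, z}. (w, c) \<notin> (dir ?T)\<^sup>+"
      by (rule finite_acyclic_obtain_sink)
    have w_max: "\<forall>c \<in> W - {w}. (w, c) \<notin> (dir ?T)\<^sup>+"
    proof (intro ballI notI)
      fix c assume "c \<in> W - {w}" and path: "(w, c) \<in> (dir ?T)\<^sup>+"
      with w_sink have "c \<in> an ?T {y, z}" by blast
      with an_trancl_closed[OF path] w show False by blast
    qed
    obtain z' where "z' \<in> nodes G" "valid_cis G x y {z'} (W - {w})"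
      using valid_cis_remove_maximal[OF adm less.prems(1)] w w_max by blast
    moreover have "finite W"
      using adm less.prems(2) unfolding is_admg_def by (meson finite_subset)
    then have "card (W - {w}) < card W" using w by (metis DiffD1 card_Diff1_less)
    moreover have "W - {w} \<subseteq> nodes G" using less.prems(2) by blast
    ultimately obtain z'' W' where "z'' \<in> nodes G" "W' \<subseteq> W - {w}"
      "W' \<subseteq> an ?T {y, z''}" "valid_cis G x y {z''} W'"
      using less.hyps by meson
    then show ?thesis by blast
  qed
qed

theorem mainTheorem7:
  fixes G :: "'v admg" and x y :: 'v
  assumes "is_admg G" and "x \<in> nodes G" and "y \<in> nodes G" and "x \<noteq> y"
  shows "(\<exists>z W. z \<in> nodes G \<and> W \<subseteq> nodes G \<and> valid_cis G x y {z} W)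
     \<longleftrightarrow> (\<exists>z' W'. z' \<in> nodes G \<and> W' \<subseteq> nodes G \<and> W' \<subseteq> an (tilde G x y) {y, z'}
            \<and> valid_cis G x y {z'} W')"
proof
  assume "\<exists>z W. z \<in> nodes G \<and> W \<subseteq> nodes G \<and> valid_cis G x y {z} W"
  then obtain z W where "z \<in> nodes G" "W \<subseteq> nodes G" "valid_cis G x y {z} W" by blast
  from valid_cis_ancestral_exists[OF assms(1) this(3,2,1)] obtain z' W' where "z' \<in> nodes G"
    "W' \<subseteq> W" "W' \<subseteq> an (tilde G x y) {y, z'}" "valid_cis G x y {z'} W'"
    by blast
  moreover from \<open>W' \<subseteq> W\<close> \<open>W \<subseteq> nodes G\<close> have "W' \<subseteq> nodes G" by (rule subset_trans)
  ultimately show "\<exists>z' W'. z' \<in> nodes G \<and> W' \<subseteq> nodes G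
      \<and> W' \<subseteq> an (tilde G x y) {y, z'} \<and> valid_cis G x y {z'} W'"
    by blast
qed blast

end
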